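(* Let $(\mathcal{F}_t)_{t\ge0}$ be a filtration and, for each $1\le i\le j\le d$, let $(\gamma^{ij}_t)_{t\ge1}$ be real random variables with $\gamma^{ij}_t$ $\mathcal{F}_t$-measurable. Suppose $\mathbb{E}[\gamma^{ij}_t\mid\mathcal{F}_{t-1}]=0$ and $\mathbb{E}[|\gamma^{ij}_t|^m\mid\mathcal{F}_{t-1}]\le m!$ for all integers $m\ge2$, all $t\ge1$ and all $1\le i\le j\le d$. Then for every $\tau\ge1$ and every $w>0$, $$\mathbb{P}\Big(\max_{1\le i\le j\le d}\Big|\frac1\tau\sum_{t=1}^\tau\gamma^{ij}_t\Big|\ge w+\sqrt{2w}+\sqrt{\frac{4\log(2d^2)}{\tau}}+\frac{2\log(2d^2)}{\tau}\Big)\le\exp\Big(-\frac{\tau w}{2}\Big).$$ *)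

theory Defs
  imports "HOL-Probability.Probability"
begin

end

(*
  Exponential supermartingale argument.  For 0 < l < 1 and a nonnegative
  F_(t-1)-measurable Z, write exp (l y) = 1 + l y + R(y): the linear term has
  conditional mean zero, and expanding R into its power series and bounding
  the m-th conditional moment by m! turns E[Z R(X_t)] into a geometric series,
  so E[Z exp (l X_t)] <= (1 + l^2/(1 - l)) E[Z].  Iterating along the
  filtration gives E[exp (l S_n)] <= exp (n l^2/(1 - l)) for S_n = X_1 + ... + X_n,
  and Markov's inequality with l = s/(1 + s), s = sqrt u, yields
  P(S_n >= n (2 s + s^2)) <= exp (- n u).  Applying this to +gamma^ij and
  -gamma^ij, a union bound over the at most d^2 pairs (i, j) with
  u = w/2 + log (2 d^2)/tau gives the theorem, because 2 sqrt u + u lies below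
  the stated threshold.
*)
theory Submission
  imports Defs
begin

lemma exp_minus_one_minus_sums:
  fixes y :: real
  shows "(\<lambda>i. y ^ (i + 2) / fact (i + 2)) sums (exp y - 1 - y)"
proof -
  have "(\<lambda>n. y ^ n / fact n) sums exp y"
    using exp_converges[of y] by (simp add: divide_inverse mult.commute)
  from sums_split_initial_segment[OF this, of 2]
  show ?thesis by (simp add: numeral_2_eq_2 diff_diff_eq)
qed

lemma ennreal_exp_minus_one_minus_le:
  fixes y :: real
  shows "ennreal (exp y - 1 - y) \<le> (\<Sum>i. ennreal (\<bar>y\<bar> ^ (i + 2) / fact (i + 2)))"
proof -
  have "exp y - 1 - y = (\<Sum>i. y ^ (i + 2) / fact (i + 2))"
    using exp_minus_one_minus_sums by (simp add: sums_iff)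
  also have "\<dots> \<le> (\<Sum>i. \<bar>y\<bar> ^ (i + 2) / fact (i + 2))"
    by (intro suminf_le divide_right_mono sums_summable[OF exp_minus_one_minus_sums])
      (metis abs_ge_self power_abs, simp)
  finally have "ennreal (exp y - 1 - y) \<le> ennreal (\<Sum>i. \<bar>y\<bar> ^ (i + 2) / fact (i + 2))"
    by (rule ennreal_leI)
  also have "\<dots> = (\<Sum>i. ennreal (\<bar>y\<bar> ^ (i + 2) / fact (i + 2)))"
    by (intro suminf_ennreal2[symmetric] sums_summable[OF exp_minus_one_minus_sums]) simp
  finally show ?thesis .
qed

lemma suminf_ennreal_power_add_2:
  fixes l :: real
  assumes "0 \<le> l" "l < 1"
  shows "(\<Sum>i. ennreal (l ^ (i + 2))) = ennreal (l\<^sup>2 / (1 - l))"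
proof -
  have "(\<lambda>i. l ^ i * l\<^sup>2) sums (l\<^sup>2 / (1 - l))"
    using sums_mult2[OF geometric_sums, of l "l\<^sup>2"] assms by simp
  then have "(\<lambda>i. l ^ (i + 2)) sums (l\<^sup>2 / (1 - l))"
    by (simp only: power_add)
  then show ?thesis
    using assms by (simp add: suminf_ennreal2 sums_iff)
qed

lemma chernoff_exponent_eq:
  fixes s :: real
  assumes "0 < s"
  defines "l \<equiv> s / (1 + s)"
  shows "l * (2 * s + s\<^sup>2) - l\<^sup>2 / (1 - l) = s\<^sup>2"
proof -
  have "1 - l = 1 / (1 + s)"
    using assms unfolding l_def by (simp add: field_simps)
  then have "l\<^sup>2 / (1 - l) = l\<^sup>2 * (1 + s)"
    by simp
  also have "\<dots> = s\<^sup>2 / (1 + s)"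
    using assms unfolding l_def power_divide by (simp add: power2_eq_square)
  finally have "l * (2 * s + s\<^sup>2) - l\<^sup>2 / (1 - l) = (s * (2 * s + s\<^sup>2) - s\<^sup>2) / (1 + s)"
    unfolding l_def by (simp add: diff_divide_distrib)
  also have "\<dots> = s\<^sup>2"
    using assms by (simp add: field_simps power2_eq_square)
  finally show ?thesis .
qed

lemma real_cond_exp_uminus: "real_cond_exp M F (\<lambda>x. - f x) x = - real_cond_exp M F f x"
  by (simp add: real_cond_exp_def)

lemma integrable_integral_le_of_nn_integral_le:
  fixes f :: "'a \<Rightarrow> real"
  assumes [measurable]: "f \<in> borel_measurable M"
    and nonneg: "\<And>x. 0 \<le> f x"
    and bound: "(\<integral>\<^sup>+ x. ennreal (f x) \<partial>M) \<le> ennreal b" and "0 \<le> b"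
  shows "integrable M f" and "(\<integral>x. f x \<partial>M) \<le> b"
proof -
  show int: "integrable M f"
    using le_less_trans[OF bound ennreal_less_top] nonneg by (intro integrableI_bounded) auto
  have "ennreal (\<integral>x. f x \<partial>M) \<le> ennreal b"
    using bound nonneg by (simp add: nn_integral_eq_integral[OF int])
  then show "(\<integral>x. f x \<partial>M) \<le> b"
    using \<open>0 \<le> b\<close> by simp
qed

lemma (in finite_measure) measure_Max_ge_le:
  fixes f :: "'p \<Rightarrow> 'a \<Rightarrow> real"
  assumes "finite P" "P \<noteq> {}"
    and [measurable]: "\<And>p. p \<in> P \<Longrightarrow> f p \<in> borel_measurable M"
    and bound: "\<And>p. p \<in> P \<Longrightarrow> measure M {x \<in> space M. c \<le> f p x} \<le> b"
  shows "measure M {x \<in> space M. c \<le> Max ((\<lambda>p. f p x) ` P)} \<le> real (card P) * b"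
proof -
  have events: "{x \<in> space M. c \<le> f p x} \<in> sets M" if "p \<in> P" for p
    using that by measurable
  have "{x \<in> space M. c \<le> Max ((\<lambda>p. f p x) ` P)} = (\<Union>p\<in>P. {x \<in> space M. c \<le> f p x})"
    using assms(1,2) by (auto simp: Max_ge_iff)
  also have "measure M \<dots> \<le> (\<Sum>p\<in>P. measure M {x \<in> space M. c \<le> f p x})"
    using assms(1) events by (intro finite_measure_subadditive_finite) auto
  also have "\<dots> \<le> real (card P) * b"
    using bound sum_bounded_above[of P "\<lambda>p. measure M {x \<in> space M. c \<le> f p x}" b] by simp
  finally show ?thesis .
qed

context sigma_finite_subalgebra
begin

lemma nn_integral_mult_le_of_nn_cond_exp_le:
  assumes [measurable]: "Z \<in> borel_measurable F" "V \<in> borel_measurable M"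
    and bound: "AE x in M. nn_cond_exp M F V x \<le> c"
  shows "(\<integral>\<^sup>+ x. Z x * V x \<partial>M) \<le> c * (\<integral>\<^sup>+ x. Z x \<partial>M)"
proof -
  have "(\<integral>\<^sup>+ x. Z x * V x \<partial>M) = (\<integral>\<^sup>+ x. Z x * nn_cond_exp M F V x \<partial>M)"
    by (rule nn_cond_exp_intg[symmetric]) measurable
  also have "\<dots> \<le> (\<integral>\<^sup>+ x. c * Z x \<partial>M)"
    using bound
    by (intro nn_integral_mono_AE) (auto elim!: eventually_mono simp: mult.commute[of c] intro: mult_left_mono)
  also have "\<dots> = c * (\<integral>\<^sup>+ x. Z x \<partial>M)"
    by (intro nn_integral_cmult measurable_from_subalg[OF subalg]) measurable
  finally show ?thesis .
qed

lemma integral_mult_eq_0_of_real_cond_exp_eq_0: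
  assumes "integrable M (\<lambda>x. Z x * Y x)"
    and [measurable]: "Z \<in> borel_measurable F" "Y \<in> borel_measurable M"
    and "AE x in M. real_cond_exp M F Y x = 0"
  shows "(\<integral>x. Z x * Y x \<partial>M) = 0"
proof -
  have [measurable]: "Z \<in> borel_measurable M"
    by (rule measurable_from_subalg[OF subalg]) measurable
  have "(\<integral>x. Z x * Y x \<partial>M) = (\<integral>x. Z x * real_cond_exp M F Y x \<partial>M)"
    using assms by (intro real_cond_exp_intg(2)[symmetric])
  also have "\<dots> = 0"
    using assms(4) by (subst integral_cong_AE[where g = "\<lambda>_. 0"]) auto
  finally show ?thesis .
qed

lemma nn_integral_mult_exp_remainder_le:
  fixes Z :: "'a \<Rightarrow> ennreal" and Y :: "'a \<Rightarrow> real" and l :: real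
  assumes [measurable]: "Z \<in> borel_measurable F" "Y \<in> borel_measurable M"
    and moments: "\<And>m. 2 \<le> m \<Longrightarrow>
       AE x in M. nn_cond_exp M F (\<lambda>y. ennreal (\<bar>Y y\<bar> ^ m)) x \<le> ennreal (fact m)"
    and l: "0 < l" "l < 1"
  shows "(\<integral>\<^sup>+ x. Z x * ennreal (exp (l * Y x) - 1 - l * Y x) \<partial>M)
           \<le> ennreal (l\<^sup>2 / (1 - l)) * (\<integral>\<^sup>+ x. Z x \<partial>M)"
proof -
  have [measurable]: "Z \<in> borel_measurable M"
    by (rule measurable_from_subalg[OF subalg]) measurable
  define c where "c i = ennreal (l ^ (i + 2) / fact (i + 2))" for i
  have "Z x * ennreal (exp (l * Y x) - 1 - l * Y x)
          \<le> (\<Sum>i. c i * (Z x * ennreal (\<bar>Y x\<bar> ^ (i + 2))))" for x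
  proof -
    have "ennreal (\<bar>l * Y x\<bar> ^ (i + 2) / fact (i + 2)) = c i * ennreal (\<bar>Y x\<bar> ^ (i + 2))" for i
      using l unfolding c_def
      by (simp add: abs_mult power_mult_distrib ennreal_mult'[symmetric] field_simps)
    then show ?thesis
      using mult_left_mono[OF ennreal_exp_minus_one_minus_le[of "l * Y x"], of "Z x"]
      by (simp add: mult_ac)
  qed
  then have "(\<integral>\<^sup>+ x. Z x * ennreal (exp (l * Y x) - 1 - l * Y x) \<partial>M)
               \<le> (\<integral>\<^sup>+ x. (\<Sum>i. c i * (Z x * ennreal (\<bar>Y x\<bar> ^ (i + 2)))) \<partial>M)"
    by (intro nn_integral_mono)
  also have "\<dots> = (\<Sum>i. \<integral>\<^sup>+ x. c i * (Z x * ennreal (\<bar>Y x\<bar> ^ (i + 2))) \<partial>M)"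
    by (rule nn_integral_suminf) measurable
  also have "\<dots> = (\<Sum>i. c i * (\<integral>\<^sup>+ x. Z x * ennreal (\<bar>Y x\<bar> ^ (i + 2)) \<partial>M))"
    by (subst nn_integral_cmult) auto
  also have "\<dots> \<le> (\<Sum>i. c i * (ennreal (fact (i + 2)) * (\<integral>\<^sup>+ x. Z x \<partial>M)))"
    by (intro suminf_le mult_left_mono nn_integral_mult_le_of_nn_cond_exp_le moments) auto
  also have "\<dots> = (\<Sum>i. ennreal (l ^ (i + 2))) * (\<integral>\<^sup>+ x. Z x \<partial>M)"
    using l unfolding c_def
    by (simp add: mult.assoc[symmetric] ennreal_mult[symmetric] del: ennreal_mult)
  also have "\<dots> = ennreal (l\<^sup>2 / (1 - l)) * (\<integral>\<^sup>+ x. Z x \<partial>M)"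
    using l by (subst suminf_ennreal_power_add_2) auto
  finally show ?thesis .
qed

lemma integrable_mult_of_nn_cond_exp_power2_le:
  fixes Z Y :: "'a \<Rightarrow> real"
  assumes [measurable]: "Z \<in> borel_measurable F" and Z_nonneg: "\<And>x. 0 \<le> Z x"
    and Z_int: "integrable M Z"
    and [measurable]: "Y \<in> borel_measurable M"
    and moment: "AE x in M. nn_cond_exp M F (\<lambda>y. ennreal (\<bar>Y y\<bar> ^ 2)) x \<le> ennreal c"
  shows "integrable M (\<lambda>x. Z x * Y x)"
proof (rule integrableI_bounded)
  have [measurable]: "Z \<in> borel_measurable M"
    by (rule measurable_from_subalg[OF subalg]) measurable
  show "(\<lambda>x. Z x * Y x) \<in> borel_measurable M"
    by measurable
  have "\<bar>Z x * Y x\<bar> \<le> Z x + Z x * \<bar>Y x\<bar> ^ 2" for x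
  proof -
    have "0 \<le> (\<bar>Y x\<bar> - 1)\<^sup>2"
      by simp
    then have "\<bar>Y x\<bar> \<le> 1 + \<bar>Y x\<bar> ^ 2"
      by (simp add: power2_eq_square algebra_simps)
    then have "Z x * \<bar>Y x\<bar> \<le> Z x * (1 + \<bar>Y x\<bar> ^ 2)"
      by (rule mult_left_mono) (rule Z_nonneg)
    then show ?thesis
      using Z_nonneg[of x] by (simp add: abs_mult distrib_left)
  qed
  then have "(\<integral>\<^sup>+ x. ennreal (norm (Z x * Y x)) \<partial>M)
               \<le> (\<integral>\<^sup>+ x. ennreal (Z x) + ennreal (Z x) * ennreal (\<bar>Y x\<bar> ^ 2) \<partial>M)"
    using Z_nonneg
    by (intro nn_integral_mono) (simp add: ennreal_mult[symmetric] ennreal_plus[symmetric] del: ennreal_plus)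
  also have "\<dots> = (\<integral>\<^sup>+ x. ennreal (Z x) \<partial>M) + (\<integral>\<^sup>+ x. ennreal (Z x) * ennreal (\<bar>Y x\<bar> ^ 2) \<partial>M)"
    by (rule nn_integral_add) measurable
  also have "\<dots> \<le> (\<integral>\<^sup>+ x. ennreal (Z x) \<partial>M) + ennreal c * (\<integral>\<^sup>+ x. ennreal (Z x) \<partial>M)"
    using moment by (intro add_left_mono nn_integral_mult_le_of_nn_cond_exp_le) measurable
  also have "\<dots> < \<infinity>"
    using Z_nonneg
    by (simp add: nn_integral_eq_integral[OF Z_int] ennreal_mult_less_top flip: ennreal_mult)
  finally show "(\<integral>\<^sup>+ x. ennreal (norm (Z x * Y x)) \<partial>M) < \<infinity>" .
qed

lemma integral_mult_exp_le:
  fixes Z Y :: "'a \<Rightarrow> real" and l :: real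
  assumes [measurable]: "Z \<in> borel_measurable F" and Z_nonneg: "\<And>x. 0 \<le> Z x"
    and Z_int: "integrable M Z"
    and [measurable]: "Y \<in> borel_measurable M"
    and mean_zero: "AE x in M. real_cond_exp M F Y x = 0"
    and moments: "\<And>m. 2 \<le> m \<Longrightarrow>
       AE x in M. nn_cond_exp M F (\<lambda>y. ennreal (\<bar>Y y\<bar> ^ m)) x \<le> ennreal (fact m)"
    and l: "0 < l" "l < 1"
  shows "integrable M (\<lambda>x. Z x * exp (l * Y x))"
    and "(\<integral>x. Z x * exp (l * Y x) \<partial>M) \<le> (1 + l\<^sup>2 / (1 - l)) * (\<integral>x. Z x \<partial>M)"
proof -
  have [measurable]: "Z \<in> borel_measurable M"
    by (rule measurable_from_subalg[OF subalg]) measurable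
  define R where "R x = exp (l * Y x) - 1 - l * Y x" for x
  have R_nonneg: "0 \<le> R x" for x
    unfolding R_def using exp_ge_add_one_self[of "l * Y x"] by linarith
  have ZY_int: "integrable M (\<lambda>x. Z x * Y x)"
    using moments[of 2]
    by (intro integrable_mult_of_nn_cond_exp_power2_le[where c = 2] Z_nonneg Z_int) auto
  have ZY_zero: "(\<integral>x. Z x * Y x \<partial>M) = 0"
    using ZY_int mean_zero by (intro integral_mult_eq_0_of_real_cond_exp_eq_0) measurable
  have "(\<integral>\<^sup>+ x. ennreal (Z x * R x) \<partial>M) \<le> ennreal (l\<^sup>2 / (1 - l)) * (\<integral>\<^sup>+ x. ennreal (Z x) \<partial>M)"
    using nn_integral_mult_exp_remainder_le[of "\<lambda>x. ennreal (Z x)", OF _ _ moments l]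
    using Z_nonneg R_nonneg by (simp add: R_def ennreal_mult)
  also have "\<dots> = ennreal (l\<^sup>2 / (1 - l) * (\<integral>x. Z x \<partial>M))"
    using l Z_nonneg
    by (simp add: nn_integral_eq_integral[OF Z_int] integral_nonneg ennreal_mult[symmetric] del: ennreal_mult)
  finally have ZR_int: "integrable M (\<lambda>x. Z x * R x)"
    and ZR_le: "(\<integral>x. Z x * R x \<partial>M) \<le> l\<^sup>2 / (1 - l) * (\<integral>x. Z x \<partial>M)"
    using l Z_nonneg R_nonneg
    by (auto intro!: integrable_integral_le_of_nn_integral_le simp: R_def integral_nonneg)
  have split: "Z x * exp (l * Y x) = Z x + l * (Z x * Y x) + Z x * R x" for x
    unfolding R_def by (simp add: algebra_simps)
  show "integrable M (\<lambda>x. Z x * exp (l * Y x))"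
    unfolding split using Z_int ZY_int ZR_int by auto
  have "(\<integral>x. Z x * exp (l * Y x) \<partial>M) = (\<integral>x. Z x \<partial>M) + (\<integral>x. Z x * R x \<partial>M)"
    unfolding split using Z_int ZY_int ZR_int ZY_zero by simp
  with ZR_le show "(\<integral>x. Z x * exp (l * Y x) \<partial>M) \<le> (1 + l\<^sup>2 / (1 - l)) * (\<integral>x. Z x \<partial>M)"
    by (simp add: algebra_simps)
qed

end

locale bernstein_martingale_difference = prob_space M for M :: "'a measure" +
  fixes F :: "nat \<Rightarrow> 'a measure" and X :: "nat \<Rightarrow> 'a \<Rightarrow> real"
  assumes subalgebra_F: "\<And>t. subalgebra M (F t)"
    and sets_F_mono: "\<And>s t. s \<le> t \<Longrightarrow> sets (F s) \<subseteq> sets (F t)"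
    and X_adapted: "\<And>t. 1 \<le> t \<Longrightarrow> X t \<in> borel_measurable (F t)"
    and X_cond_mean_zero: "\<And>t. 1 \<le> t \<Longrightarrow> AE x in M. real_cond_exp M (F (t - 1)) (X t) x = 0"
    and X_cond_moments: "\<And>t m. 1 \<le> t \<Longrightarrow> 2 \<le> m \<Longrightarrow>
       AE x in M. nn_cond_exp M (F (t - 1)) (\<lambda>y. ennreal (\<bar>X t y\<bar> ^ m)) x \<le> ennreal (fact m)"
begin

lemma sigma_finite_subalgebra_F: "sigma_finite_subalgebra M (F t)"
  using subalgebra_F
  by (intro finite_measure_subalgebra_is_sigma_finite) (unfold_locales)

lemma borel_measurable_sum_X_F: "(\<lambda>x. \<Sum>t = 1..n. X t x) \<in> borel_measurable (F n)"
proof (intro borel_measurable_sum measurable_from_subalg[OF _ X_adapted])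
  fix t assume "t \<in> {1..n}"
  then show "subalgebra (F n) (F t)"
    using subalgebra_F[of t] subalgebra_F[of n] sets_F_mono[of t n]
    by (auto simp: subalgebra_def)
qed auto

lemma borel_measurable_sum_X: "(\<lambda>x. \<Sum>t = 1..n. X t x) \<in> borel_measurable M"
  by (rule measurable_from_subalg[OF subalgebra_F borel_measurable_sum_X_F])

lemma integrable_exp_sum_and_integral_le:
  assumes l: "0 < l" "l < 1"
  shows "integrable M (\<lambda>x. exp (l * (\<Sum>t = 1..n. X t x)))
    \<and> (\<integral>x. exp (l * (\<Sum>t = 1..n. X t x)) \<partial>M) \<le> (1 + l\<^sup>2 / (1 - l)) ^ n"
proof (induction n)
  case 0
  then show ?case by simp
next
  case (Suc n)
  have [measurable]: "(\<lambda>x. \<Sum>t = 1..n. X t x) \<in> borel_measurable (F n)"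
    by (rule borel_measurable_sum_X_F)
  have X_Suc: "X (Suc n) \<in> borel_measurable M"
    by (rule measurable_from_subalg[OF subalgebra_F X_adapted]) simp
  have exp_sum_Suc: "exp (l * (\<Sum>t = 1..Suc n. X t x))
                       = exp (l * (\<Sum>t = 1..n. X t x)) * exp (l * X (Suc n) x)" for x
    by (simp add: distrib_left exp_add)
  have Z_meas: "(\<lambda>x. exp (l * (\<Sum>t = 1..n. X t x))) \<in> borel_measurable (F n)"
    by measurable
  have mean_zero: "AE x in M. real_cond_exp M (F n) (X (Suc n)) x = 0"
    using X_cond_mean_zero[of "Suc n"] by simp
  have moments: "\<And>m. 2 \<le> m \<Longrightarrow>
      AE x in M. nn_cond_exp M (F n) (\<lambda>y. ennreal (\<bar>X (Suc n) y\<bar> ^ m)) x \<le> ennreal (fact m)"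
    using X_cond_moments[of "Suc n"] by simp
  note step = sigma_finite_subalgebra.integral_mult_exp_le[OF sigma_finite_subalgebra_F Z_meas _
      conjunct1[OF Suc.IH] X_Suc mean_zero moments l]
  have int: "integrable M (\<lambda>x. exp (l * (\<Sum>t = 1..n. X t x)) * exp (l * X (Suc n) x))"
    using step by simp
  have "(\<integral>x. exp (l * (\<Sum>t = 1..n. X t x)) * exp (l * X (Suc n) x) \<partial>M)
          \<le> (1 + l\<^sup>2 / (1 - l)) * (\<integral>x. exp (l * (\<Sum>t = 1..n. X t x)) \<partial>M)"
    using step by simp
  also have "\<dots> \<le> (1 + l\<^sup>2 / (1 - l)) * (1 + l\<^sup>2 / (1 - l)) ^ n"
    using Suc.IH l by (intro mult_left_mono) auto
  finally show ?case
    using int unfolding exp_sum_Suc by simp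
qed

lemma measure_sum_ge_le:
  assumes l: "0 < l" "l < 1"
  shows "measure M {x \<in> space M. a \<le> (\<Sum>t = 1..n. X t x)}
           \<le> exp (- (l * a)) * (1 + l\<^sup>2 / (1 - l)) ^ n"
proof -
  note mgf = integrable_exp_sum_and_integral_le[OF l, of n]
  have "measure M {x \<in> space M. a \<le> (\<Sum>t = 1..n. X t x)}
          = measure M {x \<in> space M. exp (l * a) \<le> exp (l * (\<Sum>t = 1..n. X t x))}"
    using l by simp
  also have "\<dots> \<le> (\<integral>x. exp (l * (\<Sum>t = 1..n. X t x)) \<partial>M) / exp (l * a)"
    using mgf by (intro integral_Markov_inequality_measure[where A = "space M"]) auto
  also have "\<dots> \<le> (1 + l\<^sup>2 / (1 - l)) ^ n / exp (l * a)"
    using mgf by (simp add: divide_right_mono)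
  finally show ?thesis
    by (simp add: exp_minus field_simps)
qed

lemma measure_sum_ge_le_exp:
  assumes "0 < u" and a: "real n * (2 * sqrt u + u) \<le> a"
  shows "measure M {x \<in> space M. a \<le> (\<Sum>t = 1..n. X t x)} \<le> exp (- (real n * u))"
proof -
  define s where "s = sqrt u"
  define l where "l = s / (1 + s)"
  have s: "0 < s" "s\<^sup>2 = u"
    using \<open>0 < u\<close> by (simp_all add: s_def)
  have l: "0 < l" "l < 1"
    using s by (simp_all add: l_def)
  have "(1 + l\<^sup>2 / (1 - l)) ^ n \<le> exp (l\<^sup>2 / (1 - l)) ^ n"
    using l exp_ge_add_one_self[of "l\<^sup>2 / (1 - l)"] by (intro power_mono) auto
  also have "\<dots> = exp (real n * (l\<^sup>2 / (1 - l)))"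
    by (rule exp_of_nat_mult[symmetric])
  finally have mgf_le: "(1 + l\<^sup>2 / (1 - l)) ^ n \<le> exp (real n * (l\<^sup>2 / (1 - l)))" .
  have "real n * (2 * s + s\<^sup>2) \<le> a"
    using a s(2) by (simp add: s_def)
  then have "real n * (l * (2 * s + s\<^sup>2)) \<le> l * a"
    using l by (simp add: mult.left_commute mult_left_mono)
  moreover have "l * (2 * s + s\<^sup>2) = u + l\<^sup>2 / (1 - l)"
    using chernoff_exponent_eq[OF s(1)] s(2) by (simp add: l_def)
  ultimately have "real n * (u + l\<^sup>2 / (1 - l)) \<le> l * a"
    by simp
  then have exponent_le: "real n * u \<le> l * a - real n * (l\<^sup>2 / (1 - l))"
    by (simp add: distrib_left)
  have "measure M {x \<in> space M. a \<le> (\<Sum>t = 1..n. X t x)}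
          \<le> exp (- (l * a)) * (1 + l\<^sup>2 / (1 - l)) ^ n"
    by (rule measure_sum_ge_le[OF l])
  also have "\<dots> \<le> exp (- (l * a)) * exp (real n * (l\<^sup>2 / (1 - l)))"
    using mgf_le by (intro mult_left_mono) auto
  also have "\<dots> = exp (- (l * a - real n * (l\<^sup>2 / (1 - l))))"
    by (simp add: exp_add[symmetric])
  also have "\<dots> \<le> exp (- (real n * u))"
    using exponent_le by simp
  finally show ?thesis .
qed

lemma bernstein_martingale_difference_uminus:
  "bernstein_martingale_difference M F (\<lambda>t x. - X t x)"
proof
  fix t :: nat assume t: "1 \<le> t"
  show "(\<lambda>x. - X t x) \<in> borel_measurable (F t)"
    using X_adapted[OF t] by measurable
  show "AE x in M. real_cond_exp M (F (t - 1)) (\<lambda>x. - X t x) x = 0"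
    using X_cond_mean_zero[OF t] by (simp add: real_cond_exp_uminus)
  show "AE x in M. nn_cond_exp M (F (t - 1)) (\<lambda>y. ennreal (\<bar>- X t y\<bar> ^ m)) x \<le> ennreal (fact m)"
    if "2 \<le> m" for m
    using X_cond_moments[OF t that] by simp
qed (use subalgebra_F sets_F_mono in auto)

lemma measure_abs_mean_ge_le:
  assumes "0 < n" "0 < u" "2 * sqrt u + u \<le> c"
  shows "measure M {x \<in> space M. c \<le> \<bar>(1 / real n) * (\<Sum>t = 1..n. X t x)\<bar>}
           \<le> 2 * exp (- (real n * u))"
proof -
  have nc: "real n * (2 * sqrt u + u) \<le> real n * c"
    using assms by simp
  have [measurable]: "(\<lambda>x. \<Sum>t = 1..n. X t x) \<in> borel_measurable M"
    by (rule borel_measurable_sum_X)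
  have [measurable]: "(\<lambda>x. \<Sum>t = 1..n. - X t x) \<in> borel_measurable M"
    unfolding sum_negf by measurable
  have "{x \<in> space M. c \<le> \<bar>(1 / real n) * (\<Sum>t = 1..n. X t x)\<bar>}
          = {x \<in> space M. real n * c \<le> (\<Sum>t = 1..n. X t x)}
            \<union> {x \<in> space M. real n * c \<le> (\<Sum>t = 1..n. - X t x)}"
    using \<open>0 < n\<close> by (auto simp: abs_if field_simps sum_negf)
  also have "measure M \<dots> \<le> measure M {x \<in> space M. real n * c \<le> (\<Sum>t = 1..n. X t x)}
                             + measure M {x \<in> space M. real n * c \<le> (\<Sum>t = 1..n. - X t x)}"
    by (intro measure_Un_le) measurable
  also have "\<dots> \<le> exp (- (real n * u)) + exp (- (real n * u))"
    using measure_sum_ge_le_exp[OF \<open>0 < u\<close> nc]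
      bernstein_martingale_difference.measure_sum_ge_le_exp[OF bernstein_martingale_difference_uminus
        \<open>0 < u\<close> nc]
    by (rule add_mono)
  finally show ?thesis
    by simp
qed

end

lemma measure_Max_abs_mean_ge_le:
  fixes X :: "'p \<Rightarrow> nat \<Rightarrow> 'a \<Rightarrow> real"
  assumes "finite P" "P \<noteq> {}"
    and family: "\<And>p. p \<in> P \<Longrightarrow> bernstein_martingale_difference M F (X p)"
    and "0 < n" "0 < u" "2 * sqrt u + u \<le> c"
  shows "measure M {x \<in> space M. c \<le> Max ((\<lambda>p. \<bar>(1 / real n) * (\<Sum>t = 1..n. X p t x)\<bar>) ` P)}
           \<le> real (card P) * (2 * exp (- (real n * u)))"
proof -
  obtain p0 where "p0 \<in> P"
    using \<open>P \<noteq> {}\<close> by blast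
  then interpret prob_space M
    using family bernstein_martingale_difference.axioms(1) by blast
  show ?thesis
  proof (rule measure_Max_ge_le[OF \<open>finite P\<close> \<open>P \<noteq> {}\<close>])
    fix p assume "p \<in> P"
    then interpret bernstein_martingale_difference M F "X p"
      by (rule family)
    show "(\<lambda>x. \<bar>(1 / real n) * (\<Sum>t = 1..n. X p t x)\<bar>) \<in> borel_measurable M"
      using borel_measurable_sum_X by measurable
    show "measure M {x \<in> space M. c \<le> \<bar>(1 / real n) * (\<Sum>t = 1..n. X p t x)\<bar>}
            \<le> 2 * exp (- (real n * u))"
      using assms by (intro measure_abs_mean_ge_le)
  qed
qed

lemma card_ordered_pairs_le: "card {(i, j). 1 \<le> i \<and> i \<le> j \<and> j \<le> (d::nat)} \<le> d\<^sup>2"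
proof -
  have "card {(i, j). 1 \<le> i \<and> i \<le> j \<and> j \<le> d} \<le> card ({1..d} \<times> {1..d})"
    by (intro card_mono) auto
  then show ?thesis
    by (simp add: power2_eq_square)
qed

lemma two_sqrt_add_le:
  fixes w a :: real
  assumes "0 \<le> w" "0 \<le> a"
  shows "2 * sqrt (w / 2 + a) + (w / 2 + a) \<le> w + sqrt (2 * w) + sqrt (4 * a) + 2 * a"
proof -
  have "2 * sqrt (w / 2 + a) = sqrt (2 * w + 4 * a)"
    using real_sqrt_mult[of 4 "w / 2 + a"] by (simp add: algebra_simps)
  also have "\<dots> \<le> sqrt (2 * w) + sqrt (4 * a)"
    using assms by (intro sqrt_add_le_add_sqrt) auto
  finally show ?thesis
    using assms by simp
qed

lemma union_bound_exponent:
  fixes w :: real and d n :: nat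
  assumes "1 \<le> d" "0 < n" "0 < w"
  defines "L \<equiv> ln (2 * real d ^ 2)"
  defines "u \<equiv> w / 2 + L / real n"
  shows "0 < u"
    and "2 * sqrt u + u \<le> w + sqrt (2 * w) + sqrt (4 * L / real n) + 2 * L / real n"
    and "real d ^ 2 * (2 * exp (- (real n * u))) = exp (- (real n * w / 2))"
proof -
  have "1 \<le> real d ^ 2"
    using \<open>1 \<le> d\<close> by (simp add: one_le_power)
  then have "1 \<le> 2 * real d ^ 2"
    by linarith
  then have L: "exp L = 2 * real d ^ 2" "0 \<le> L"
    unfolding L_def by (intro exp_ln ln_ge_zero; linarith)+
  show "0 < u" "2 * sqrt u + u \<le> w + sqrt (2 * w) + sqrt (4 * L / real n) + 2 * L / real n"
    using two_sqrt_add_le[of w "L / real n"] \<open>0 < w\<close> L(2)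
    by (simp_all add: u_def add_pos_nonneg)
  have "real n * u = real n * w / 2 + L"
    using \<open>0 < n\<close> by (simp add: u_def field_simps)
  then have "exp (- (real n * u)) = exp (- (real n * w / 2)) / exp L"
    by (simp add: exp_diff[symmetric])
  then show "real d ^ 2 * (2 * exp (- (real n * u))) = exp (- (real n * w / 2))"
    using L(1) \<open>1 \<le> d\<close> by simp
qed

theorem lemma8:
  fixes M :: "'a measure"
    and F :: "nat \<Rightarrow> 'a measure"
    and \<gamma> :: "nat \<Rightarrow> nat \<Rightarrow> nat \<Rightarrow> 'a \<Rightarrow> real"
    and d :: nat and \<tau> :: nat and w :: real
  assumes "prob_space M"
    and filt_sub: "\<And>t. subalgebra M (F t)"
    and filt_mono: "\<And>s t. s \<le> t \<Longrightarrow> sets (F s) \<subseteq> sets (F t)"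
    and adapted: "\<And>i j t. 1 \<le> i \<Longrightarrow> i \<le> j \<Longrightarrow> j \<le> d \<Longrightarrow> t \<ge> 1 \<Longrightarrow>
                    \<gamma> i j t \<in> borel_measurable (F t)"
    and integr: "\<And>i j t. 1 \<le> i \<Longrightarrow> i \<le> j \<Longrightarrow> j \<le> d \<Longrightarrow> t \<ge> 1 \<Longrightarrow>
                    integrable M (\<gamma> i j t)"
    and mean0: "\<And>i j t. 1 \<le> i \<Longrightarrow> i \<le> j \<Longrightarrow> j \<le> d \<Longrightarrow> t \<ge> 1 \<Longrightarrow>
                    AE x in M. real_cond_exp M (F (t - 1)) (\<gamma> i j t) x = 0"
    and moments: "\<And>i j t m. 1 \<le> i \<Longrightarrow> i \<le> j \<Longrightarrow> j \<le> d \<Longrightarrow> t \<ge> 1 \<Longrightarrow> m \<ge> 2 \<Longrightarrow>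
                    AE x in M. nn_cond_exp M (F (t - 1)) (\<lambda>y. ennreal (\<bar>\<gamma> i j t y\<bar> ^ m)) x
                               \<le> ennreal (fact m)"
    and "d \<ge> 1" and "\<tau> \<ge> 1" and "w > 0"
  shows "measure M {x \<in> space M.
            Max {\<bar>(1 / real \<tau>) * (\<Sum>t = 1..\<tau>. \<gamma> i j t x)\<bar> | i j. 1 \<le> i \<and> i \<le> j \<and> j \<le> d}
              \<ge> w + sqrt (2 * w) + sqrt (4 * ln (2 * real d ^ 2) / real \<tau>)
                  + 2 * ln (2 * real d ^ 2) / real \<tau>}
         \<le> exp (- (real \<tau> * w / 2))"
proof -
  define P where "P = {(i, j). 1 \<le> i \<and> i \<le> j \<and> j \<le> d}"
  define u where "u = w / 2 + ln (2 * real d ^ 2) / real \<tau>"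
  have "0 < \<tau>"
    using \<open>\<tau> \<ge> 1\<close> by simp
  note u = union_bound_exponent[OF \<open>d \<ge> 1\<close> this \<open>w > 0\<close>, folded u_def]
  have Max_eq: "{\<bar>(1 / real \<tau>) * (\<Sum>t = 1..\<tau>. \<gamma> i j t x)\<bar> | i j. 1 \<le> i \<and> i \<le> j \<and> j \<le> d}
      = (\<lambda>p. \<bar>(1 / real \<tau>) * (\<Sum>t = 1..\<tau>. \<gamma> (fst p) (snd p) t x)\<bar>) ` P" for x
    unfolding P_def by force
  have family: "bernstein_martingale_difference M F (\<gamma> (fst p) (snd p))" if "p \<in> P" for p
    using that assms(1) filt_sub filt_mono adapted mean0 moments
    unfolding bernstein_martingale_difference_def bernstein_martingale_difference_axioms_def P_def
    by auto
  have "finite P"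
    by (rule finite_subset[of _ "{1..d} \<times> {1..d}"]) (auto simp: P_def)
  moreover have "P \<noteq> {}"
    using \<open>d \<ge> 1\<close> by (auto simp: P_def)
  ultimately have "measure M {x \<in> space M. Max {\<bar>(1 / real \<tau>) * (\<Sum>t = 1..\<tau>. \<gamma> i j t x)\<bar> | i j. 1 \<le> i \<and> i \<le> j \<and> j \<le> d}
               \<ge> w + sqrt (2 * w) + sqrt (4 * ln (2 * real d ^ 2) / real \<tau>)
                  + 2 * ln (2 * real d ^ 2) / real \<tau>}
          \<le> real (card P) * (2 * exp (- (real \<tau> * u)))"
    unfolding Max_eq by (rule measure_Max_abs_mean_ge_le) (fact family \<open>0 < \<tau>\<close> u(1) u(2))+
  also have "\<dots> \<le> real d ^ 2 * (2 * exp (- (real \<tau> * u)))"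
    using card_ordered_pairs_le[of d] by (simp add: P_def flip: of_nat_power)
  also have "\<dots> = exp (- (real \<tau> * w / 2))"
    using u(3) \<open>\<tau> \<ge> 1\<close> by simp
  finally show ?thesis .
qed

end
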